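(* Let $q$ be a positive integer and suppose that for each divisor $d$ of $q$ we are given a function $a_d:\mathbb Z\to\mathbb C$ of period $d$ with $|a_d(n)|\le1$, such that $a_{d_1d_2}=a_{d_1}a_{d_2}$ whenever $d_1d_2\mid q$ and $\gcd(d_1,d_2)=1$. Write $q=q_1q_2\cdots q_kQ$ with $q_1,\dots,q_k,Q$ pairwise coprime. Let $I$ be an interval of length $N$ and set $M_j=\lfloor(N/q_j)^{2/3}\rfloor$ for $1\le j\le k$. Then $$\Big|\frac1N\sum_{n\in I}a_q(n)\Big|\le4\sum_{i=1}^kM_i^{-2^{-i}}+4\,\mathbf E^{1/2^k},$$ where $$\mathbf E:=\frac1{M_1^2\cdots M_k^2}\sum_{\substack{1\le h_{j,0}\ne h_{j,1}\le M_j\\ 1\le j\le k}}\Big|\frac1N\sum_{n\in I}a_{\mathbf h}(n)\Big|,$$ $$a_{\mathbf h}(n):=\prod_{\substack{j_1,\dots,j_k\in\{0,1\}\\ j_1+\cdots+j_k\ \text{even}}}a_Q\Big(n+\sum_{i=1}^kh_{i,j_i}q_i\Big)\prod_{\substack{j_1,\dots,j_k\in\{0,1\}\\ j_1+\cdots+j_k\ \text{odd}}}\overline{a_Q\Big(n+\sum_{i=1}^kh_{i,j_i}q_i\Big)}.$$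
   Context: The sums over $I$ are over integers $n\in I$; $\mathbf h$ denotes the tuple $(h_{i,j})_{1\le i\le k,\,j\in\{0,1\}}$. *)

theory Defs
  imports "HOL-Analysis.Analysis" "HOL-Library.FuncSet"
begin

definition intv :: "int \<Rightarrow> nat \<Rightarrow> int set" where
  "intv m N = {m + 1 .. m + int N}"

definition Mpar :: "nat \<Rightarrow> nat \<Rightarrow> nat" where
  "Mpar N qj = nat \<lfloor>(real N / real qj) powr (2/3)\<rfloor>"

text \<open>The twisted product a_h(n); the sign vector j ranges over {0,1}^k indexed by 1..k,
  the shift tuple h is indexed by pairs (i,j) with 1 <= i <= k, j in {0,1}.\<close>
definition a_h :: "(int \<Rightarrow> complex) \<Rightarrow> nat \<Rightarrow> (nat \<Rightarrow> nat) \<Rightarrow> (nat \<times> nat \<Rightarrow> int) \<Rightarrow> int \<Rightarrow> complex"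
  where
  "a_h aQ k qs h n =
     (\<Prod>js \<in> {js \<in> PiE {1..k} (\<lambda>_. {0,1::nat}). even (\<Sum>i=1..k. js i)}.
         aQ (n + (\<Sum>i=1..k. h (i, js i) * int (qs i)))) *
     (\<Prod>js \<in> {js \<in> PiE {1..k} (\<lambda>_. {0,1::nat}). odd (\<Sum>i=1..k. js i)}.
         cnj (aQ (n + (\<Sum>i=1..k. h (i, js i) * int (qs i)))))"

definition Hset :: "nat \<Rightarrow> (nat \<Rightarrow> nat) \<Rightarrow> (nat \<times> nat \<Rightarrow> int) set" where
  "Hset k M = {h \<in> PiE ({1..k} \<times> {0,1}) (\<lambda>(i,j). {1 .. int (M i)}).
                  \<forall>i\<in>{1..k}. h (i,0) \<noteq> h (i,1)}"

definition Ebold :: "(int \<Rightarrow> complex) \<Rightarrow> nat \<Rightarrow> (nat \<Rightarrow> nat) \<Rightarrow> (nat \<Rightarrow> nat) \<Rightarrow> int set \<Rightarrow> nat \<Rightarrow> real"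
  where
  "Ebold aQ k qs M I N =
     (1 / (\<Prod>i=1..k. real (M i) ^ 2)) *
     (\<Sum>h \<in> Hset k M. norm ((1 / real N) * (\<Sum>n\<in>I. a_h aQ k qs h n)))"

end

theory Submission
  imports Defs
begin

(* Van der Corput differencing, one modulus at a time. Write a_q = a_{q_1} ... a_{q_k} a_Q.
   Since a_{q_j} has period q_j, replacing n by n + h q_j with 1 <= h <= M_j changes the sum
   over I only by O(M_j q_j) = O(N M_j^(-1/2)); averaging over h and applying Cauchy-Schwarz
   in n removes a_{q_j} and replaces the remaining factor b by its correlations
   b(n + h_0 q_j) * conj (b(n + h_1 q_j)), the diagonal h_0 = h_1 costing 1/M_j. Each step
   thus costs 3 M_j^(-1/2) and a square root, and after k steps only the twisted product
   a_h of a_Q survives, averaged over h as in E. *)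

lemma finite_intv [simp]: "finite (intv m N)"
  unfolding intv_def by simp

lemma card_intv [simp]: "card (intv m N) = N"
  unfolding intv_def by simp

lemma intv_eq_image: "intv m N = (\<lambda>i. m + 1 + int i) ` {..<N}"
  unfolding intv_def
proof (intro set_eqI iffI)
  fix x assume "x \<in> {m + 1..m + int N}"
  then show "x \<in> (\<lambda>i. m + 1 + int i) ` {..<N}"
    by (intro image_eqI[of _ _ "nat (x - m - 1)"]) auto
qed auto

lemma sum_intv_eq_sum_lessThan: "(\<Sum>n\<in>intv m N. F n) = (\<Sum>i<N. F (m + 1 + int i))"
  unfolding intv_eq_image by (subst sum.reindex) (auto simp: inj_on_def)

lemma norm_sum_intv_shift_le:
  fixes F :: "int \<Rightarrow> 'a::real_normed_vector"
  assumes F_bounded: "\<And>n. norm (F n) \<le> 1"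
  shows "norm ((\<Sum>n\<in>intv m N. F (n + int t)) - (\<Sum>n\<in>intv m N. F n)) \<le> 2 * real t"
proof (induction t)
  case (Suc t)
  let ?S = "\<lambda>s. \<Sum>n\<in>intv m N. F (n + int s)"
  have "?S (Suc t) - ?S t = (\<Sum>i<N. F (m + 1 + int (Suc i) + int t) - F (m + 1 + int i + int t))"
    unfolding sum_intv_eq_sum_lessThan sum_subtractf by (simp add: algebra_simps)
  also have "\<dots> = F (m + 1 + int N + int t) - F (m + 1 + int 0 + int t)"
    by (rule sum_lessThan_telescope)
  finally have "norm (?S (Suc t) - ?S t) \<le> 2"
    using norm_triangle_ineq4 F_bounded by (smt (verit))
  then show ?case
    using Suc norm_triangle_ineq[of "?S (Suc t) - ?S t" "?S t - ?S 0"] by simp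
qed simp

lemma periodic_add_mult:
  assumes "\<And>n. f (n + int q) = f n"
  shows "f (n + int t * int q) = f n"
proof (induction t)
  case (Suc t)
  have "f (n + int (Suc t) * int q) = f ((n + int t * int q) + int q)"
    by (simp add: algebra_simps)
  then show ?case using assms Suc by simp
qed simp

lemma norm_sum_periodic_shift_le:
  fixes f b :: "int \<Rightarrow> 'a::real_normed_div_algebra"
  assumes "\<And>n. f (n + int q) = f n" "\<And>n. norm (f n) \<le> 1" "\<And>n. norm (b n) \<le> 1"
  shows "norm ((\<Sum>n\<in>intv m N. f n * b (n + int t * int q)) - (\<Sum>n\<in>intv m N. f n * b n))
           \<le> 2 * real t * real q"
proof -
  have "(\<Sum>n\<in>intv m N. f n * b (n + int t * int q))
          = (\<Sum>n\<in>intv m N. f (n + int (t * q)) * b (n + int (t * q)))"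
    using periodic_add_mult[of f q, OF assms(1)] by simp
  then show ?thesis
    using norm_sum_intv_shift_le[where F="\<lambda>n. f n * b n" and t="t * q"] assms(2,3)
    by (simp add: norm_mult mult_le_one mult.assoc)
qed

definition distinct_pairs :: "nat \<Rightarrow> (int \<times> int) set" where
  "distinct_pairs M = {p \<in> {1..int M} \<times> {1..int M}. fst p \<noteq> snd p}"

definition shift_correlation :: "(int \<Rightarrow> complex) \<Rightarrow> nat \<Rightarrow> nat \<Rightarrow> int set \<Rightarrow> nat \<Rightarrow> real" where
  "shift_correlation b q M I N = 1 / real M ^ 2 *
     (\<Sum>p\<in>distinct_pairs M.
        norm (1 / real N * (\<Sum>n\<in>I. b (n + fst p * int q) * cnj (b (n + snd p * int q)))))"

lemma shift_correlation_nonneg: "shift_correlation b q M I N \<ge> 0"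
  unfolding shift_correlation_def by (intro mult_nonneg_nonneg sum_nonneg) auto

lemma sum_norm_shift_average_sq_le:
  fixes b :: "int \<Rightarrow> complex"
  assumes b_bounded: "\<And>n. norm (b n) \<le> 1" and "finite I"
  shows "(\<Sum>n\<in>I. norm (1 / of_nat M * (\<Sum>h=1..int M. b (n + h * int q))) ^ 2)
           \<le> real (card I) / real M + 1 / real M ^ 2 *
             (\<Sum>p\<in>distinct_pairs M. norm (\<Sum>n\<in>I. b (n + fst p * int q) * cnj (b (n + snd p * int q))))"
    (is "?L \<le> _")
proof -
  define H where "H = {1..int M}"
  define c where "c p n = b (n + fst p * int q) * cnj (b (n + snd p * int q))" for p n
  define diag where "diag = (\<lambda>h. (h, h)) ` H"
  have "complex_of_real (norm (1 / of_nat M * (\<Sum>h\<in>H. b (n + h * int q))) ^ 2)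
          = 1 / of_nat M ^ 2 * (\<Sum>p\<in>H \<times> H. c p n)" for n
    unfolding complex_norm_square c_def
    by (simp add: power2_eq_square sum_product sum.cartesian_product case_prod_beta cnj_sum)
  then have "complex_of_real ?L = 1 / of_nat M ^ 2 * (\<Sum>p\<in>H \<times> H. \<Sum>n\<in>I. c p n)"
    unfolding H_def of_real_sum by (simp add: sum_distrib_left sum.swap[of _ I])
  also have "(\<Sum>p\<in>H \<times> H. \<Sum>n\<in>I. c p n)
               = (\<Sum>p\<in>diag. \<Sum>n\<in>I. c p n) + (\<Sum>p\<in>distinct_pairs M. \<Sum>n\<in>I. c p n)"
    by (subst sum.union_disjoint[symmetric])
       (auto simp: diag_def H_def distinct_pairs_def intro!: sum.cong)
  finally have L_eq: "complex_of_real ?L = 1 / of_nat M ^ 2 *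
      ((\<Sum>p\<in>diag. \<Sum>n\<in>I. c p n) + (\<Sum>p\<in>distinct_pairs M. \<Sum>n\<in>I. c p n))" .
  have "norm (\<Sum>p\<in>diag. \<Sum>n\<in>I. c p n) \<le> (\<Sum>p\<in>diag. \<Sum>n\<in>I. (1::real))"
    by (intro order_trans[OF norm_sum] sum_mono)
       (auto simp: c_def norm_mult intro: mult_le_one b_bounded)
  also have "\<dots> = real M * real (card I)"
    by (simp add: diag_def H_def card_image inj_on_def)
  finally have diag_le: "norm (\<Sum>p\<in>diag. \<Sum>n\<in>I. c p n) \<le> real M * real (card I)" .
  have "?L = norm (complex_of_real ?L)"
    unfolding norm_of_real by (simp add: sum_nonneg)
  also have "\<dots> = 1 / real M ^ 2 *
      norm ((\<Sum>p\<in>diag. \<Sum>n\<in>I. c p n) + (\<Sum>p\<in>distinct_pairs M. \<Sum>n\<in>I. c p n))"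
    unfolding L_eq by (simp add: norm_mult norm_divide norm_power)
  also have "\<dots> \<le> 1 / real M ^ 2 *
      (real M * real (card I) + (\<Sum>p\<in>distinct_pairs M. norm (\<Sum>n\<in>I. c p n)))"
    by (intro mult_left_mono order_trans[OF norm_triangle_ineq] add_mono diag_le norm_sum) auto
  also have "\<dots> = real (card I) / real M + 1 / real M ^ 2 *
      (\<Sum>p\<in>distinct_pairs M. norm (\<Sum>n\<in>I. c p n))"
    by (cases "M = 0") (simp_all add: field_simps power2_eq_square)
  finally show ?thesis unfolding c_def .
qed

lemma van_der_corput_periodic:
  fixes f b :: "int \<Rightarrow> complex"
  assumes f_periodic: "\<And>n. f (n + int q) = f n" and f_bounded: "\<And>n. norm (f n) \<le> 1"
    and b_bounded: "\<And>n. norm (b n) \<le> 1" and "M \<ge> 1" and "N > 0"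
  shows "norm (1 / real N * (\<Sum>n\<in>intv m N. f n * b n))
           \<le> 2 * real M * real q / real N + sqrt (1 / real M + shift_correlation b q M (intv m N) N)"
proof -
  define I where "I = intv m N"
  define H where "H = {1..int M}"
  define B where "B n = 1 / of_nat M * (\<Sum>h\<in>H. b (n + h * int q))" for n
  define S where "S = (\<Sum>n\<in>I. f n * b n)"
  define S' where "S' h = (\<Sum>n\<in>I. f n * b (n + h * int q))" for h
  define T where "T = (\<Sum>n\<in>I. f n * B n)"
  define E where "E = shift_correlation b q M I N"
  have card_H: "card H = M" and "real M > 0"
    using \<open>M \<ge> 1\<close> by (auto simp: H_def)
  have shift_le: "norm (S - S' h) \<le> 2 * real M * real q" if "h \<in> H" for h
  proof -
    obtain t where t: "h = int t" "t \<le> M"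
      using \<open>h \<in> H\<close> by (auto simp: H_def intro: that[of "nat h"])
    have "norm (S' h - S) \<le> 2 * real t * real q"
      unfolding S_def S'_def I_def t
      by (rule norm_sum_periodic_shift_le[where f = f and b = b, OF f_periodic f_bounded b_bounded])
    also have "\<dots> \<le> 2 * real M * real q"
      using t by (simp add: mult_right_mono)
    finally show ?thesis by (simp add: norm_minus_commute)
  qed
  have "S - T = (\<Sum>h\<in>H. S - S' h) / of_nat M"
    using card_H \<open>real M > 0\<close>
    by (simp add: T_def B_def S'_def sum_subtractf sum_distrib_left sum_distrib_right
        sum.swap[of _ H I] mult_ac field_simps)
  then have "norm (S - T) = norm (\<Sum>h\<in>H. S - S' h) / real M"
    by (simp add: norm_divide)
  also have "\<dots> \<le> (\<Sum>h\<in>H. 2 * real M * real q) / real M"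
    by (intro divide_right_mono order_trans[OF norm_sum] sum_mono shift_le) auto
  also have "\<dots> = 2 * real M * real q"
    using card_H \<open>real M > 0\<close> by simp
  finally have S_T: "norm (S - T) \<le> 2 * real M * real q" .
  have "(\<Sum>n\<in>I. norm (B n) ^ 2) \<le> real N / real M + 1 / real M ^ 2 *
      (\<Sum>p\<in>distinct_pairs M. norm (\<Sum>n\<in>I. b (n + fst p * int q) * cnj (b (n + snd p * int q))))"
    using sum_norm_shift_average_sq_le[OF b_bounded, where I = I and M = M and q = q] by (simp add: B_def H_def I_def)
  also have "\<dots> = real N * (1 / real M + E)"
    using \<open>N > 0\<close>
    by (simp add: E_def shift_correlation_def norm_mult norm_divide field_simps flip: sum_divide_distrib)
  finally have B_sq: "(\<Sum>n\<in>I. norm (B n) ^ 2) \<le> real N * (1 / real M + E)" .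
  have "norm T \<le> (\<Sum>n\<in>I. norm (B n))"
    unfolding T_def
    by (intro order_trans[OF norm_sum] sum_mono)
       (auto simp: norm_mult intro: mult_left_le_one_le f_bounded)
  also have "\<dots> \<le> sqrt (real N * (\<Sum>n\<in>I. norm (B n) ^ 2))"
    using sum_squared_le_sum_of_squares[of "\<lambda>n. norm (B n)" I]
    by (intro real_le_rsqrt) (simp add: I_def mult.commute)
  also have "\<dots> \<le> sqrt (real N ^ 2 * (1 / real M + E))"
    using B_sq by (simp add: power2_eq_square mult_left_mono mult.assoc)
  also have "\<dots> = real N * sqrt (1 / real M + E)"
    by (simp add: real_sqrt_mult)
  finally have T_le: "norm T \<le> real N * sqrt (1 / real M + E)" .
  have "norm (1 / real N * S) \<le> (norm (S - T) + norm T) / real N"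
    using norm_triangle_ineq[of "S - T" T] \<open>N > 0\<close>
    by (simp add: norm_mult norm_divide divide_right_mono)
  also have "\<dots> \<le> (2 * real M * real q + real N * sqrt (1 / real M + E)) / real N"
    using S_T T_le by (intro divide_right_mono add_mono) auto
  finally show ?thesis
    using \<open>N > 0\<close> by (simp add: S_def E_def I_def add_divide_distrib)
qed

lemma van_der_corput_periodic_powr:
  fixes f b :: "int \<Rightarrow> complex"
  assumes f_periodic: "\<And>n. f (n + int q) = f n" and f_bounded: "\<And>n. norm (f n) \<le> 1"
    and b_bounded: "\<And>n. norm (b n) \<le> 1" and "M \<ge> 1" and "N > 0"
    and M_q_N: "real M powr (3/2) * real q \<le> real N"
  shows "norm (1 / real N * (\<Sum>n\<in>intv m N. f n * b n))
           \<le> 3 * real M powr (- (1/2)) + sqrt (shift_correlation b q M (intv m N) N)"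
proof -
  define E where "E = shift_correlation b q M (intv m N) N"
  have "real M > 0" using \<open>M \<ge> 1\<close> by simp
  have sqrt_M: "real M powr (- (1/2)) = sqrt (1 / real M)"
    using \<open>real M > 0\<close> by (simp add: powr_minus_divide powr_half_sqrt real_sqrt_divide)
  have "real M * sqrt (real M) * real q \<le> real N"
    using M_q_N \<open>real M > 0\<close> powr_add[of "real M" 1 "1/2"] by (simp add: powr_half_sqrt)
  then have "real M * real q \<le> real N / sqrt (real M)"
    using \<open>real M > 0\<close> by (simp add: field_simps)
  then have "2 * real M * real q / real N \<le> 2 * sqrt (1 / real M)"
    using \<open>N > 0\<close> \<open>real M > 0\<close> by (simp add: field_simps real_sqrt_divide)
  moreover have "sqrt (1 / real M + E) \<le> sqrt (1 / real M) + sqrt E"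
    using sqrt_add_le_add_sqrt[of "1 / real M" E] shift_correlation_nonneg \<open>real M > 0\<close>
    by (simp add: E_def)
  ultimately show ?thesis
    using van_der_corput_periodic[where f = f and b = b, OF f_periodic f_bounded b_bounded \<open>M \<ge> 1\<close> \<open>N > 0\<close>, of m]
    unfolding sqrt_M by (simp add: E_def)
qed

definition cnj_if_odd :: "nat \<Rightarrow> complex \<Rightarrow> complex" where
  "cnj_if_odd s z = (if even s then z else cnj z)"

lemma cnj_if_odd_mult: "cnj_if_odd s (x * y) = cnj_if_odd s x * cnj_if_odd s y"
  by (simp add: cnj_if_odd_def)

lemma norm_cnj_if_odd [simp]: "norm (cnj_if_odd s z) = norm z"
  by (simp add: cnj_if_odd_def)

lemma cnj_if_odd_Suc: "cnj_if_odd (Suc s) z = cnj (cnj_if_odd s z)"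
  by (simp add: cnj_if_odd_def)

abbreviation sign_vectors :: "nat \<Rightarrow> (nat \<Rightarrow> nat) set" where
  "sign_vectors j \<equiv> PiE {1..j} (\<lambda>_. {0, 1})"

lemma a_h_eq_prod:
  "a_h G j qs h n = (\<Prod>js\<in>sign_vectors j.
     cnj_if_odd (\<Sum>i=1..j. js i) (G (n + (\<Sum>i=1..j. h (i, js i) * int (qs i)))))"
  unfolding a_h_def cnj_if_odd_def
  by (subst prod.If_cases) (auto simp: finite_PiE Int_def intro!: arg_cong2[where f = "(*)"] prod.cong)

lemma prod_sign_vectors_Suc:
  "(\<Prod>js\<in>sign_vectors (Suc j). F js) = (\<Prod>y\<in>{0, 1}. \<Prod>js\<in>sign_vectors j. F (js(Suc j := y)))"
proof -
  have "{1..Suc j} = insert (Suc j) {1..j}" by auto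
  then have "(\<Prod>js\<in>sign_vectors (Suc j). F js)
               = (\<Prod>js\<in>(\<lambda>(y, g). g(Suc j := y)) ` ({0, 1} \<times> sign_vectors j). F js)"
    by (simp add: PiE_insert_eq)
  also have "\<dots> = (\<Prod>(y, js)\<in>{0, 1} \<times> sign_vectors j. F (js(Suc j := y)))"
    by (subst prod.reindex[OF inj_combinator]) (simp_all add: split_def)
  finally show ?thesis
    by (simp add: prod.cartesian_product)
qed

lemma sum_upd_Suc:
  "(\<Sum>i=1..Suc j. F i ((g(Suc j := y)) i)) = (\<Sum>i=1..j. F i (g i)) + F (Suc j) y"
  by (auto intro!: sum.cong)

definition upd_shifts :: "(nat \<times> nat \<Rightarrow> int) \<Rightarrow> nat \<Rightarrow> int \<times> int \<Rightarrow> nat \<times> nat \<Rightarrow> int" where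
  "upd_shifts h i p = h((i, 0) := fst p, (i, 1) := snd p)"

lemma a_h_Suc:
  "a_h G (Suc j) qs (upd_shifts h (Suc j) p) n =
     a_h G j qs h (n + fst p * int (qs (Suc j))) * cnj (a_h G j qs h (n + snd p * int (qs (Suc j))))"
proof -
  define h' where "h' = upd_shifts h (Suc j) p"
  define U where "U h' js = cnj_if_odd (\<Sum>i=1..j. js i)
      (G (n + h' * int (qs (Suc j)) + (\<Sum>i=1..j. h (i, js i) * int (qs i))))" for h' js
  have shifts: "(\<Sum>i=1..Suc j. h' (i, (js(Suc j := y)) i) * int (qs i))
      = (\<Sum>i=1..j. h (i, js i) * int (qs i)) + h' (Suc j, y) * int (qs (Suc j))" for js y
    by (subst sum_upd_Suc) (auto simp: h'_def upd_shifts_def intro!: sum.cong)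
  have "a_h G (Suc j) qs h' n = (\<Prod>y\<in>{0, 1}. \<Prod>js\<in>sign_vectors j.
      cnj_if_odd ((\<Sum>i=1..j. js i) + y)
        (G (n + ((\<Sum>i=1..j. h (i, js i) * int (qs i)) + h' (Suc j, y) * int (qs (Suc j))))))"
    unfolding a_h_eq_prod prod_sign_vectors_Suc sum_upd_Suc[where F = "\<lambda>_ v. v"] shifts ..
  also have "\<dots> = (\<Prod>js\<in>sign_vectors j. U (fst p) js) * (\<Prod>js\<in>sign_vectors j. cnj (U (snd p) js))"
    by (simp add: U_def h'_def upd_shifts_def cnj_if_odd_Suc algebra_simps)
  also have "\<dots> = a_h G j qs h (n + fst p * int (qs (Suc j))) * cnj (a_h G j qs h (n + snd p * int (qs (Suc j))))"
    unfolding a_h_eq_prod U_def cnj_prod ..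
  finally show ?thesis unfolding h'_def .
qed

lemma a_h_mult: "a_h (\<lambda>n. P n * G n) j qs h n = a_h P j qs h n * a_h G j qs h n"
  unfolding a_h_eq_prod cnj_if_odd_mult prod.distrib ..

lemma norm_a_h_le:
  assumes "\<And>n. norm (G n) \<le> 1"
  shows "norm (a_h G j qs h n) \<le> 1"
  unfolding a_h_eq_prod
  by (rule order_trans[OF norm_prod_le]) (auto intro: prod_le_1 assms)

lemma a_h_periodic:
  assumes "\<And>n. P (n + int q) = P n"
  shows "a_h P j qs h (n + int q) = a_h P j qs h n"
proof -
  have "P (n + int q + s) = P (n + s)" for s
    using assms[of "n + s"] by (simp add: ac_simps)
  then show ?thesis
    unfolding a_h_eq_prod by simp
qed

lemma a_h_0: "a_h G 0 qs h n = G n"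
  unfolding a_h_eq_prod by (simp add: cnj_if_odd_def)

lemma Hset_0: "Hset 0 M = {\<lambda>_. undefined}"
  unfolding Hset_def by simp

lemma Hset_Suc:
  "Hset (Suc j) M = (\<lambda>(h, p). upd_shifts h (Suc j) p) ` (Hset j M \<times> distinct_pairs (M (Suc j)))"
proof (intro set_eqI iffI)
  fix g assume g: "g \<in> Hset (Suc j) M"
  define h where "h = g((Suc j, 0) := undefined, (Suc j, 1) := undefined)"
  define p where "p = (g (Suc j, 0), g (Suc j, 1))"
  have "g = upd_shifts h (Suc j) p"
    unfolding upd_shifts_def h_def p_def by auto
  moreover have "h \<in> Hset j M"
    using g unfolding Hset_def h_def PiE_def extensional_def Pi_def by auto
  moreover have "p \<in> distinct_pairs (M (Suc j))"
    using g unfolding Hset_def p_def distinct_pairs_def PiE_def Pi_def by auto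
  ultimately show "g \<in> (\<lambda>(h, p). upd_shifts h (Suc j) p) ` (Hset j M \<times> distinct_pairs (M (Suc j)))"
    by auto
next
  fix g assume "g \<in> (\<lambda>(h, p). upd_shifts h (Suc j) p) ` (Hset j M \<times> distinct_pairs (M (Suc j)))"
  then obtain h p where "h \<in> Hset j M" "p \<in> distinct_pairs (M (Suc j))" "g = upd_shifts h (Suc j) p"
    by auto
  then show "g \<in> Hset (Suc j) M"
    unfolding Hset_def distinct_pairs_def upd_shifts_def PiE_def extensional_def Pi_def
    by (auto simp: le_Suc_eq)
qed

lemma inj_on_upd_shifts_Hset:
  "inj_on (\<lambda>(h, p). upd_shifts h (Suc j) p) (Hset j M \<times> distinct_pairs (M (Suc j)))"
proof (rule inj_onI, clarify)
  fix h1 p1 h2 p2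
  assume h: "h1 \<in> Hset j M" "h2 \<in> Hset j M"
    and eq: "upd_shifts h1 (Suc j) p1 = upd_shifts h2 (Suc j) p2"
  have "p1 = p2"
    using fun_cong[OF eq, of "(Suc j, 0)"] fun_cong[OF eq, of "(Suc j, 1)"]
    by (simp add: upd_shifts_def prod_eq_iff)
  moreover have "h1 = h2"
  proof (rule extensionalityI)
    show "h1 \<in> extensional ({1..j} \<times> {0, 1})" "h2 \<in> extensional ({1..j} \<times> {0, 1})"
      using h unfolding Hset_def PiE_def by auto
    show "h1 x = h2 x" if "x \<in> {1..j} \<times> {0, 1}" for x
      using that fun_cong[OF eq, of x] by (auto simp: upd_shifts_def)
  qed
  ultimately show "h1 = h2 \<and> p1 = p2" by simp
qed

lemma sum_Hset_Suc:
  "(\<Sum>g\<in>Hset (Suc j) M. F g)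
     = (\<Sum>h\<in>Hset j M. \<Sum>p\<in>distinct_pairs (M (Suc j)). F (upd_shifts h (Suc j) p))"
  unfolding Hset_Suc
  by (subst sum.reindex[OF inj_on_upd_shifts_Hset]) (simp add: sum.cartesian_product split_def)

lemma finite_Hset: "finite (Hset j M)"
proof (rule finite_subset)
  show "Hset j M \<subseteq> PiE ({1..j} \<times> {0, 1}) (\<lambda>(i, _). {1..int (M i)})"
    unfolding Hset_def by auto
qed (auto intro!: finite_PiE)

lemma card_Hset_le: "real (card (Hset j M)) \<le> (\<Prod>i=1..j. real (M i) ^ 2)"
proof (induction j)
  case 0
  then show ?case by (simp add: Hset_0)
next
  case (Suc j)
  have "card (distinct_pairs (M (Suc j))) \<le> card ({1..int (M (Suc j))} \<times> {1..int (M (Suc j))})"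
    unfolding distinct_pairs_def by (intro card_mono) auto
  then have card_pairs: "real (card (distinct_pairs (M (Suc j)))) \<le> real (M (Suc j)) ^ 2"
    by (simp add: card_cartesian_product power2_eq_square flip: of_nat_mult)
  have "card (Hset (Suc j) M) = card (Hset j M) * card (distinct_pairs (M (Suc j)))"
    unfolding Hset_Suc card_image[OF inj_on_upd_shifts_Hset] by (rule card_cartesian_product)
  then have "real (card (Hset (Suc j) M))
               = real (card (Hset j M)) * real (card (distinct_pairs (M (Suc j))))"
    by simp
  also have "\<dots> \<le> (\<Prod>i=1..j. real (M i) ^ 2) * real (M (Suc j)) ^ 2"
    using Suc.IH card_pairs by (intro mult_mono) (auto intro: prod_nonneg)
  finally show ?case by simp
qed

lemma Ebold_nonneg: "Ebold G j qs M I N \<ge> 0"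
  unfolding Ebold_def by (intro mult_nonneg_nonneg sum_nonneg divide_nonneg_nonneg prod_nonneg) auto

lemma Ebold_0:
  fixes G :: "int \<Rightarrow> complex"
  shows "Ebold G 0 qs M I N = norm (1 / real N * (\<Sum>n\<in>I. G n))"
  unfolding Ebold_def by (simp add: Hset_0 a_h_0)

lemma Ebold_Suc:
  "Ebold G (Suc j) qs M I N = 1 / (\<Prod>i=1..j. real (M i) ^ 2) *
     (\<Sum>h\<in>Hset j M. shift_correlation (a_h G j qs h) (qs (Suc j)) (M (Suc j)) I N)"
  unfolding Ebold_def shift_correlation_def sum_Hset_Suc a_h_Suc
  by (simp add: sum_distrib_left)

lemma average_sqrt_le_sqrt_average:
  fixes x :: "'a \<Rightarrow> real"
  assumes "finite A" and x_nonneg: "\<And>a. a \<in> A \<Longrightarrow> x a \<ge> 0"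
    and "real (card A) \<le> P" and "P > 0"
  shows "1 / P * (\<Sum>a\<in>A. sqrt (x a)) \<le> sqrt (1 / P * (\<Sum>a\<in>A. x a))"
proof (rule real_le_rsqrt)
  have "(\<Sum>a\<in>A. sqrt (x a))\<^sup>2 \<le> (\<Sum>a\<in>A. (sqrt (x a))\<^sup>2) * real (card A)"
    by (rule sum_squared_le_sum_of_squares)
  also have "\<dots> = (\<Sum>a\<in>A. x a) * real (card A)"
    using x_nonneg by simp
  also have "\<dots> \<le> (\<Sum>a\<in>A. x a) * P"
    using assms by (intro mult_left_mono sum_nonneg) auto
  finally show "(1 / P * (\<Sum>a\<in>A. sqrt (x a)))\<^sup>2 \<le> 1 / P * (\<Sum>a\<in>A. x a)"
    using \<open>P > 0\<close> by (simp add: power2_eq_square field_simps)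
qed

lemma Ebold_mult_periodic_le:
  fixes P G :: "int \<Rightarrow> complex"
  assumes P_periodic: "\<And>n. P (n + int (qs (Suc j))) = P n"
    and P_bounded: "\<And>n. norm (P n) \<le> 1" and G_bounded: "\<And>n. norm (G n) \<le> 1"
    and M_pos: "\<And>i. i \<in> {1..Suc j} \<Longrightarrow> M i \<ge> 1"
    and M_q_N: "real (M (Suc j)) powr (3/2) * real (qs (Suc j)) \<le> real N" and "N > 0"
  shows "Ebold (\<lambda>n. P n * G n) j qs M (intv m N) N
           \<le> 3 * real (M (Suc j)) powr (- (1/2)) + sqrt (Ebold G (Suc j) qs M (intv m N) N)"
proof -
  define Pj where "Pj = (\<Prod>i=1..j. real (M i) ^ 2)"
  define c where "c = 3 * real (M (Suc j)) powr (- (1/2))"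
  define C where "C h = shift_correlation (a_h G j qs h) (qs (Suc j)) (M (Suc j)) (intv m N) N" for h
  have "Pj > 0"
    unfolding Pj_def using M_pos by (intro prod_pos) force
  have "M (Suc j) \<ge> 1"
    using M_pos by simp
  have "norm (1 / real N * (\<Sum>n\<in>intv m N. a_h (\<lambda>n. P n * G n) j qs h n)) \<le> c + sqrt (C h)" for h
    unfolding a_h_mult c_def C_def
    by (rule van_der_corput_periodic_powr)
       (use \<open>M (Suc j) \<ge> 1\<close> in
         \<open>auto intro: a_h_periodic norm_a_h_le P_periodic P_bounded G_bounded M_q_N \<open>N > 0\<close>\<close>)
  then have "Ebold (\<lambda>n. P n * G n) j qs M (intv m N) N \<le> 1 / Pj * (\<Sum>h\<in>Hset j M. c + sqrt (C h))"
    unfolding Ebold_def Pj_def[symmetric] using \<open>Pj > 0\<close> by (intro mult_left_mono sum_mono) auto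
  also have "\<dots> = real (card (Hset j M)) / Pj * c + 1 / Pj * (\<Sum>h\<in>Hset j M. sqrt (C h))"
    by (simp add: sum.distrib field_simps add_divide_distrib)
  also have "\<dots> \<le> 1 * c + sqrt (1 / Pj * (\<Sum>h\<in>Hset j M. C h))"
    using card_Hset_le[of j M] \<open>Pj > 0\<close>
    by (intro add_mono mult_right_mono average_sqrt_le_sqrt_average)
       (auto simp: Pj_def c_def C_def finite_Hset shift_correlation_nonneg)
  also have "1 / Pj * (\<Sum>h\<in>Hset j M. C h) = Ebold G (Suc j) qs M (intv m N) N"
    unfolding Ebold_Suc Pj_def C_def ..
  finally show ?thesis
    unfolding c_def by simp
qed

lemma powr_inverse_two_power_Suc:
  "0 \<le> x \<Longrightarrow> x powr (1 / 2 ^ Suc j) = sqrt (x powr (1 / 2 ^ j))"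
  using powr_half_sqrt_powr[of x "1 / 2 ^ j"] by (simp add: mult.commute)

lemma powr_inverse_two_power_add_le:
  fixes a b :: real
  assumes "0 \<le> a" "0 \<le> b"
  shows "(a + b) powr (1 / 2 ^ j) \<le> a powr (1 / 2 ^ j) + b powr (1 / 2 ^ j)"
proof (induction j)
  case (Suc j)
  have "(a + b) powr (1 / 2 ^ Suc j) = sqrt ((a + b) powr (1 / 2 ^ j))"
    by (rule powr_inverse_two_power_Suc) (use assms in simp)
  also have "\<dots> \<le> sqrt (a powr (1 / 2 ^ j) + b powr (1 / 2 ^ j))"
    using Suc by simp
  also have "\<dots> \<le> sqrt (a powr (1 / 2 ^ j)) + sqrt (b powr (1 / 2 ^ j))"
    by (intro sqrt_add_le_add_sqrt) auto
  also have "\<dots> = a powr (1 / 2 ^ Suc j) + b powr (1 / 2 ^ Suc j)"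
    using assms by (simp only: powr_inverse_two_power_Suc)
  finally show ?case .
qed (use assms in simp)

lemma sqrt_recurrence_le:
  fixes x c :: "nat \<Rightarrow> real"
  assumes x_nonneg: "\<And>j. j \<le> k \<Longrightarrow> x j \<ge> 0" and c_nonneg: "\<And>j. c j \<ge> 0"
    and step: "\<And>j. j < k \<Longrightarrow> x j \<le> c (Suc j) + sqrt (x (Suc j))"
  shows "x 0 \<le> (\<Sum>i=1..k. c i powr (1 / 2 ^ (i - 1))) + x k powr (1 / 2 ^ k)"
proof -
  have "x 0 \<le> (\<Sum>i=1..j. c i powr (1 / 2 ^ (i - 1))) + x j powr (1 / 2 ^ j)" if "j \<le> k" for j
    using that
  proof (induction j)
    case 0
    then show ?case using x_nonneg[of 0] by simp
  next
    case (Suc j)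
    have "x j powr (1 / 2 ^ j) \<le> (c (Suc j) + sqrt (x (Suc j))) powr (1 / 2 ^ j)"
      using step x_nonneg Suc.prems by (intro powr_mono2) auto
    also have "\<dots> \<le> c (Suc j) powr (1 / 2 ^ j) + sqrt (x (Suc j)) powr (1 / 2 ^ j)"
      using c_nonneg x_nonneg Suc.prems by (intro powr_inverse_two_power_add_le) auto
    also have "sqrt (x (Suc j)) powr (1 / 2 ^ j) = x (Suc j) powr (1 / 2 ^ Suc j)"
      using x_nonneg[of "Suc j"] Suc.prems by (simp add: powr_half_sqrt[symmetric] powr_powr)
    finally show ?case
      using Suc by simp
  qed
  then show ?thesis by simp
qed

lemma norm_average_prod_periodic_le:
  fixes P :: "nat \<Rightarrow> int \<Rightarrow> complex" and G :: "int \<Rightarrow> complex"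
  assumes P_periodic: "\<And>i n. i \<in> {1..k} \<Longrightarrow> P i (n + int (qs i)) = P i n"
    and P_bounded: "\<And>i n. i \<in> {1..k} \<Longrightarrow> norm (P i n) \<le> 1"
    and G_bounded: "\<And>n. norm (G n) \<le> 1"
    and M_pos: "\<And>i. i \<in> {1..k} \<Longrightarrow> M i \<ge> 1"
    and M_q_N: "\<And>i. i \<in> {1..k} \<Longrightarrow> real (M i) powr (3/2) * real (qs i) \<le> real N"
    and "N > 0"
  shows "norm (1 / real N * (\<Sum>n\<in>intv m N. (\<Prod>i=1..k. P i n) * G n))
           \<le> 3 * (\<Sum>i=1..k. real (M i) powr (- (1 / 2 ^ i)))
             + Ebold G k qs M (intv m N) N powr (1 / 2 ^ k)"
proof -
  define F where "F j n = (\<Prod>i=Suc j..k. P i n) * G n" for j n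
  define x where "x j = Ebold (F j) j qs M (intv m N) N" for j
  define c where "c i = 3 * real (M i) powr (- (1/2))" for i
  have F_bounded: "norm (F j n) \<le> 1" for j n
    unfolding F_def norm_mult using G_bounded P_bounded
    by (intro mult_le_one order_trans[OF norm_prod_le] prod_le_1) auto
  have x_step: "x j \<le> c (Suc j) + sqrt (x (Suc j))" if "j < k" for j
  proof -
    have "F j = (\<lambda>n. P (Suc j) n * F (Suc j) n)"
      using that by (auto simp: F_def prod.atLeast_Suc_atMost mult.assoc)
    then show ?thesis
      unfolding x_def c_def using that
      by (auto intro!: Ebold_mult_periodic_le P_periodic P_bounded F_bounded M_pos M_q_N \<open>N > 0\<close>)
  qed
  have c_le: "c i powr (1 / 2 ^ (i - 1)) \<le> 3 * real (M i) powr (- (1 / 2 ^ i))" if "i \<in> {1..k}" for i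
  proof -
    have "(2::real) ^ i = 2 * 2 ^ (i - 1)"
      using that by (cases i) auto
    then have "c i powr (1 / 2 ^ (i - 1)) = 3 powr (1 / 2 ^ (i - 1)) * real (M i) powr (- (1 / 2 ^ i))"
      by (simp add: c_def powr_mult powr_powr)
    also have "3 powr (1 / 2 ^ (i - 1)) \<le> (3::real) powr 1"
      by (intro powr_mono) auto
    finally show ?thesis
      by (simp add: mult_right_mono)
  qed
  have F_k: "F k = G"
    by (simp add: F_def fun_eq_iff)
  have "norm (1 / real N * (\<Sum>n\<in>intv m N. (\<Prod>i=1..k. P i n) * G n)) = x 0"
    by (simp add: x_def F_def Ebold_0)
  also have "\<dots> \<le> (\<Sum>i=1..k. c i powr (1 / 2 ^ (i - 1))) + x k powr (1 / 2 ^ k)"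
    using x_step by (intro sqrt_recurrence_le) (auto simp: x_def c_def Ebold_nonneg)
  also have "\<dots> \<le> 3 * (\<Sum>i=1..k. real (M i) powr (- (1 / 2 ^ i))) + x k powr (1 / 2 ^ k)"
    unfolding sum_distrib_left using c_le by (intro add_right_mono sum_mono)
  finally show ?thesis
    unfolding x_def F_k .
qed

lemma multiplicative_prod_coprime:
  fixes a :: "nat \<Rightarrow> 'b \<Rightarrow> 'c::comm_monoid_mult"
  assumes mult: "\<And>d1 d2 n. d1 * d2 dvd q \<Longrightarrow> coprime d1 d2 \<Longrightarrow> a (d1 * d2) n = a d1 n * a d2 n"
    and "finite S" and "(\<Prod>i\<in>S. qs i) * d dvd q"
    and "\<And>i j. i \<in> S \<Longrightarrow> j \<in> S \<Longrightarrow> i \<noteq> j \<Longrightarrow> coprime (qs i) (qs j)"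
    and "\<And>i. i \<in> S \<Longrightarrow> coprime (qs i) d"
  shows "a ((\<Prod>i\<in>S. qs i) * d) n = (\<Prod>i\<in>S. a (qs i) n) * a d n"
  using assms(2-)
proof (induction S rule: finite_induct)
  case (insert i S)
  have prod_eq: "(\<Prod>i\<in>insert i S. qs i) * d = qs i * ((\<Prod>i\<in>S. qs i) * d)"
    using insert.hyps by (simp add: mult.assoc)
  have "coprime (qs i) ((\<Prod>i\<in>S. qs i) * d)"
    using insert by (auto intro!: prod_coprime_right)
  then have "a ((\<Prod>i\<in>insert i S. qs i) * d) n = a (qs i) n * a ((\<Prod>i\<in>S. qs i) * d) n"
    using mult insert.prems(1) unfolding prod_eq by blast
  moreover have "(\<Prod>i\<in>S. qs i) * d dvd q"
    using insert.prems(1) unfolding prod_eq by (rule dvd_mult_right)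
  ultimately show ?case
    using insert by (simp add: mult.assoc)
qed simp

lemma Mpar_powr_mult_le:
  assumes "qj > 0"
  shows "real (Mpar N qj) powr (3/2) * real qj \<le> real N"
proof -
  define x where "x = (real N / real qj) powr (2/3)"
  have "real (Mpar N qj) \<le> x"
    by (simp add: Mpar_def x_def)
  then have "real (Mpar N qj) powr (3/2) \<le> x powr (3/2)"
    by (intro powr_mono2) auto
  also have "x powr (3/2) = real N / real qj"
    by (simp add: x_def powr_powr)
  finally show ?thesis
    using assms by (simp add: field_simps)
qed

theorem proposition6p4:
  fixes q :: nat and a :: "nat \<Rightarrow> int \<Rightarrow> complex"
    and k :: nat and qs :: "nat \<Rightarrow> nat" and Q :: nat
    and m :: int and N :: nat
  assumes q_pos: "q > 0"
    and period: "\<And>d n. d dvd q \<Longrightarrow> a d (n + int d) = a d n"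
    and bounded: "\<And>d n. d dvd q \<Longrightarrow> norm (a d n) \<le> 1"
    and mult: "\<And>d1 d2 n. d1 * d2 dvd q \<Longrightarrow> coprime d1 d2 \<Longrightarrow>
                 a (d1 * d2) n = a d1 n * a d2 n"
    and decomp: "q = (\<Prod>i=1..k. qs i) * Q"
    and cop_qs: "\<And>i j. i \<in> {1..k} \<Longrightarrow> j \<in> {1..k} \<Longrightarrow> i \<noteq> j \<Longrightarrow> coprime (qs i) (qs j)"
    and cop_Q: "\<And>i. i \<in> {1..k} \<Longrightarrow> coprime (qs i) Q"
    and N_pos: "N > 0"
    and M_pos: "\<And>j. j \<in> {1..k} \<Longrightarrow> Mpar N (qs j) \<ge> 1"
  shows "norm ((1 / real N) * (\<Sum>n\<in>intv m N. a q n))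
           \<le> 4 * (\<Sum>i=1..k. real (Mpar N (qs i)) powr (- (1 / 2 ^ i)))
             + 4 * Ebold (a Q) k qs (\<lambda>i. Mpar N (qs i)) (intv m N) N powr (1 / 2 ^ k)"
proof -
  have qs_dvd: "qs i dvd q" if "i \<in> {1..k}" for i
    unfolding decomp using that by (intro dvd_mult2 dvd_prodI) auto
  have qs_pos: "qs i > 0" if "i \<in> {1..k}" for i
    using q_pos qs_dvd[OF that] by (auto intro: Nat.gr0I)
  have "a q n = (\<Prod>i=1..k. a (qs i) n) * a Q n" for n
    unfolding decomp
    by (rule multiplicative_prod_coprime[where a = a and q = q]) (use mult decomp cop_qs cop_Q in auto)
  then have "norm ((1 / real N) * (\<Sum>n\<in>intv m N. a q n))
      \<le> 3 * (\<Sum>i=1..k. real (Mpar N (qs i)) powr (- (1 / 2 ^ i)))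
        + Ebold (a Q) k qs (\<lambda>i. Mpar N (qs i)) (intv m N) N powr (1 / 2 ^ k)"
    using norm_average_prod_periodic_le[where P = "\<lambda>i. a (qs i)" and G = "a Q"]
      period bounded qs_dvd M_pos Mpar_powr_mult_le qs_pos N_pos decomp by simp
  then show ?thesis
    by (smt (verit) sum_nonneg powr_ge_zero)
qed

end
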